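(* Let $(\mathcal P,d,\rho)$ be a rotational operad. The natural morphism $\theta^{-1}\colon\theta(\mathcal P)\to\mathcal P$, $a\mapsto\rho(a)$, factors as $$\theta(\mathcal P)\xrightarrow{\ \rho\ }\mathrm{Im}(\rho)\hookrightarrow\ker(\rho)\to\mathcal P.$$
   Context: A rotational operad is a dg operad $\mathcal P$ with a degree $-1$ square-zero operator $\rho$ on each $\mathcal P(n)$, $d\rho+\rho d=0$, satisfying $\rho(a\circ_i\rho(b))=\rho(a)\circ_i\rho(b)$. $\theta(\mathcal P)$ is the (non-unital) operad in mixed complexes with $\theta(\mathcal P)(n)=\Sigma^{-1}\mathcal P(n)$, differential $d$, operator $\rho$, and twisted compositions $a\,\tilde\circ_i\, b:=a\circ_i\rho(b)$. $\mathrm{Im}(\rho)$ and $\ker(\rho)$ are suboperads of $\mathcal P$. *)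

theory Defs
  imports Main
begin

definition ksign :: "int \<Rightarrow> 'a::ab_group_add \<Rightarrow> 'a" where
  "ksign e x = (if even e then x else - x)"

text \<open>A (unital, non-symmetric) dg operad, homological grading.
  P n k is the degree-k part of the arity-n component; d has degree -1;
  c i a b is the partial composition a \<circ>_i b (1 \<le> i \<le> arity of a); u is the unit.\<close>
definition dg_operad ::
  "(nat \<Rightarrow> int \<Rightarrow> 'a::ab_group_add set) \<Rightarrow> ('a \<Rightarrow> 'a) \<Rightarrow> (nat \<Rightarrow> 'a \<Rightarrow> 'a \<Rightarrow> 'a) \<Rightarrow> 'a \<Rightarrow> bool" where
  "dg_operad P d c u \<longleftrightarrow>
     (\<forall>n k. 0 \<in> P n k \<and> (\<forall>x\<in>P n k. \<forall>y\<in>P n k. x + y \<in> P n k) \<and> (\<forall>x\<in>P n k. - x \<in> P n k)) \<and>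
     (\<forall>n k. \<forall>x\<in>P n k. d x \<in> P n (k - 1)) \<and>
     (\<forall>n k. \<forall>x\<in>P n k. \<forall>y\<in>P n k. d (x + y) = d x + d y) \<and>
     (\<forall>n k. \<forall>x\<in>P n k. d (d x) = 0) \<and>
     (\<forall>m n p q i. \<forall>a\<in>P m p. \<forall>b\<in>P n q. 1 \<le> i \<and> i \<le> m \<longrightarrow>
         c i a b \<in> P (m + n - 1) (p + q)) \<and>
     (\<forall>m n p q i. \<forall>a\<in>P m p. \<forall>a'\<in>P m p. \<forall>b\<in>P n q. 1 \<le> i \<and> i \<le> m \<longrightarrow>
         c i (a + a') b = c i a b + c i a' b) \<and>
     (\<forall>m n p q i. \<forall>a\<in>P m p. \<forall>b\<in>P n q. \<forall>b'\<in>P n q. 1 \<le> i \<and> i \<le> m \<longrightarrow>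
         c i a (b + b') = c i a b + c i a b') \<and>
     (\<forall>m n p q i. \<forall>a\<in>P m p. \<forall>b\<in>P n q. 1 \<le> i \<and> i \<le> m \<longrightarrow>
         d (c i a b) = c i (d a) b + ksign p (c i a (d b))) \<and>
     (\<forall>l m n p q r i j. \<forall>a\<in>P l p. \<forall>b\<in>P m q. \<forall>e\<in>P n r.
         1 \<le> i \<and> i \<le> l \<and> i \<le> j \<and> j < i + m \<longrightarrow>
         c j (c i a b) e = c i a (c (j - i + 1) b e)) \<and>
     (\<forall>l m n p q r i j. \<forall>a\<in>P l p. \<forall>b\<in>P m q. \<forall>e\<in>P n r.
         1 \<le> i \<and> i < j \<and> j \<le> l \<longrightarrow>
         c (j + m - 1) (c i a b) e = ksign (q * r) (c i (c j a e) b)) \<and>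
     u \<in> P 1 0 \<and> d u = 0 \<and>
     (\<forall>n k. \<forall>a\<in>P n k. c 1 u a = a \<and> (\<forall>i. 1 \<le> i \<and> i \<le> n \<longrightarrow> c i a u = a))"

definition rotational_operad ::
  "(nat \<Rightarrow> int \<Rightarrow> 'a::ab_group_add set) \<Rightarrow> ('a \<Rightarrow> 'a) \<Rightarrow> (nat \<Rightarrow> 'a \<Rightarrow> 'a \<Rightarrow> 'a) \<Rightarrow> 'a
     \<Rightarrow> ('a \<Rightarrow> 'a) \<Rightarrow> bool" where
  "rotational_operad P d c u \<rho> \<longleftrightarrow>
     dg_operad P d c u \<and>
     (\<forall>n k. \<forall>x\<in>P n k. \<rho> x \<in> P n (k - 1)) \<and>
     (\<forall>n k. \<forall>x\<in>P n k. \<forall>y\<in>P n k. \<rho> (x + y) = \<rho> x + \<rho> y) \<and>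
     (\<forall>n k. \<forall>x\<in>P n k. \<rho> (\<rho> x) = 0) \<and>
     (\<forall>n k. \<forall>x\<in>P n k. d (\<rho> x) + \<rho> (d x) = 0) \<and>
     (\<forall>m n p q i. \<forall>a\<in>P m p. \<forall>b\<in>P n q. 1 \<le> i \<and> i \<le> m \<longrightarrow>
         \<rho> (c i a (\<rho> b)) = c i (\<rho> a) (\<rho> b))"

text \<open>theta(P): desuspended components (degree k of theta(P)(n) is degree k+1 of P(n)),
  differential of the desuspension (-d, Koszul sign), operator rho, twisted compositions.\<close>
definition thetaP :: "(nat \<Rightarrow> int \<Rightarrow> 'a set) \<Rightarrow> nat \<Rightarrow> int \<Rightarrow> 'a set" where
  "thetaP P n k = P n (k + 1)"

definition theta_d :: "('a::ab_group_add \<Rightarrow> 'a) \<Rightarrow> 'a \<Rightarrow> 'a" where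
  "theta_d d x = - d x"

definition theta_comp :: "(nat \<Rightarrow> 'a \<Rightarrow> 'a \<Rightarrow> 'a) \<Rightarrow> ('a \<Rightarrow> 'a) \<Rightarrow> nat \<Rightarrow> 'a \<Rightarrow> 'a \<Rightarrow> 'a" where
  "theta_comp c \<rho> i a b = c i a (\<rho> b)"

definition ImRho :: "(nat \<Rightarrow> int \<Rightarrow> 'a set) \<Rightarrow> ('a \<Rightarrow> 'a) \<Rightarrow> nat \<Rightarrow> int \<Rightarrow> 'a set" where
  "ImRho P \<rho> n k = \<rho> ` P n (k + 1)"

definition KerRho :: "(nat \<Rightarrow> int \<Rightarrow> 'a::zero set) \<Rightarrow> ('a \<Rightarrow> 'a) \<Rightarrow> nat \<Rightarrow> int \<Rightarrow> 'a set" where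
  "KerRho P \<rho> n k = {x \<in> P n k. \<rho> x = 0}"

definition rot_hom ::
  "(nat \<Rightarrow> int \<Rightarrow> 'a::ab_group_add set) \<Rightarrow> ('a \<Rightarrow> 'a) \<Rightarrow> ('a \<Rightarrow> 'a) \<Rightarrow> (nat \<Rightarrow> 'a \<Rightarrow> 'a \<Rightarrow> 'a) \<Rightarrow>
   (nat \<Rightarrow> int \<Rightarrow> 'b::ab_group_add set) \<Rightarrow> ('b \<Rightarrow> 'b) \<Rightarrow> ('b \<Rightarrow> 'b) \<Rightarrow> (nat \<Rightarrow> 'b \<Rightarrow> 'b \<Rightarrow> 'b) \<Rightarrow>
   ('a \<Rightarrow> 'b) \<Rightarrow> bool" where
  "rot_hom Q dQ rQ cQ R dR rR cR f \<longleftrightarrow>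
     (\<forall>n k. \<forall>x\<in>Q n k. f x \<in> R n k) \<and>
     (\<forall>n k. \<forall>x\<in>Q n k. \<forall>y\<in>Q n k. f (x + y) = f x + f y) \<and>
     (\<forall>n k. \<forall>x\<in>Q n k. f (dQ x) = dR (f x)) \<and>
     (\<forall>n k. \<forall>x\<in>Q n k. f (rQ x) = rR (f x)) \<and>
     (\<forall>m n p q i. \<forall>a\<in>Q m p. \<forall>b\<in>Q n q. 1 \<le> i \<and> i \<le> m \<longrightarrow>
         f (cQ i a b) = cR i (f a) (f b))"

end

theory Submission
  imports Defs
begin

text \<open>The map a \<mapsto> \<rho>(a) is a morphism \<theta>(P) \<rightarrow> P: it lowers the degree by one, which
  exactly undoes the desuspension; it intertwines -d with d because d\<rho> = -\<rho>d; and it turns the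
  twisted composition into the composition of P by the axiom \<rho>(a \<circ>_i \<rho> b) = \<rho> a \<circ>_i \<rho> b.
  Its image lies in Im(\<rho>), which is contained in ker(\<rho>) since \<rho>\<rho> = 0, and the remaining
  arrows are inclusions of suboperads.\<close>

lemma dg_operad_zero_mem: "dg_operad P d c u \<Longrightarrow> 0 \<in> P n k"
  and dg_operad_uminus_mem: "dg_operad P d c u \<Longrightarrow> x \<in> P n k \<Longrightarrow> - x \<in> P n k"
  and dg_operad_d_mem: "dg_operad P d c u \<Longrightarrow> x \<in> P n k \<Longrightarrow> d x \<in> P n (k - 1)"
  unfolding dg_operad_def by (elim conjE, simp)+

context
  fixes P :: "nat \<Rightarrow> int \<Rightarrow> 'a::ab_group_add set"
    and d \<rho> :: "'a \<Rightarrow> 'a" and c :: "nat \<Rightarrow> 'a \<Rightarrow> 'a \<Rightarrow> 'a" and u :: 'a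
  assumes rot: "rotational_operad P d c u \<rho>"
begin

lemma rotational_operad_dg_operad: "dg_operad P d c u"
  using rot by (simp add: rotational_operad_def)

lemma rho_mem: "x \<in> P n k \<Longrightarrow> \<rho> x \<in> P n (k - 1)"
  and rho_add: "x \<in> P n k \<Longrightarrow> y \<in> P n k \<Longrightarrow> \<rho> (x + y) = \<rho> x + \<rho> y"
  and rho_rho: "x \<in> P n k \<Longrightarrow> \<rho> (\<rho> x) = 0"
  and d_rho_add_rho_d: "x \<in> P n k \<Longrightarrow> d (\<rho> x) + \<rho> (d x) = 0"
  and rho_comp_rho: "a \<in> P m p \<Longrightarrow> b \<in> P n q \<Longrightarrow> 1 \<le> i \<Longrightarrow> i \<le> m \<Longrightarrow>
         \<rho> (c i a (\<rho> b)) = c i (\<rho> a) (\<rho> b)"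
  using rot unfolding rotational_operad_def by (elim conjE, simp)+

lemma rho_uminus:
  assumes "x \<in> P n k"
  shows "\<rho> (- x) = - \<rho> x"
proof -
  have P_group: "0 \<in> P n k" "- x \<in> P n k"
    using rotational_operad_dg_operad assms by (auto intro: dg_operad_zero_mem dg_operad_uminus_mem)
  have "\<rho> 0 = \<rho> 0 + \<rho> 0"
    using rho_add[OF P_group(1) P_group(1)] by simp
  then have "\<rho> x + \<rho> (- x) = 0"
    using rho_add[OF assms P_group(2)] by simp
  then show ?thesis
    by (simp add: eq_neg_iff_add_eq_0 add.commute)
qed

lemma rho_theta_d:
  assumes "x \<in> P n k"
  shows "\<rho> (theta_d d x) = d (\<rho> x)"
proof -
  have "\<rho> (theta_d d x) = - \<rho> (d x)"
    unfolding theta_d_def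
    using rho_uminus dg_operad_d_mem[OF rotational_operad_dg_operad assms] .
  also have "\<dots> = d (\<rho> x)"
    using d_rho_add_rho_d[OF assms] by (simp add: add_eq_0_iff)
  finally show ?thesis .
qed

lemma rot_hom_rho_thetaP:
  "rot_hom (thetaP P) (theta_d d) \<rho> (theta_comp c \<rho>) P d \<rho> c \<rho>"
  unfolding rot_hom_def thetaP_def theta_comp_def
  using rho_mem rho_add rho_theta_d rho_comp_rho by fastforce

lemma rot_hom_rho_thetaP_ImRho:
  "rot_hom (thetaP P) (theta_d d) \<rho> (theta_comp c \<rho>) (ImRho P \<rho>) d \<rho> c \<rho>"
  unfolding rot_hom_def thetaP_def theta_comp_def ImRho_def
  using rho_add rho_theta_d rho_comp_rho by fastforce

lemma ImRho_subset_KerRho: "ImRho P \<rho> n k \<subseteq> KerRho P \<rho> n k"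
  unfolding ImRho_def KerRho_def using rho_mem rho_rho by fastforce

end

lemma KerRho_subset: "KerRho P \<rho> n k \<subseteq> P n k"
  unfolding KerRho_def by blast

lemma rot_hom_id_subset:
  assumes "\<And>n k. Q n k \<subseteq> R n k"
  shows "rot_hom Q d \<rho> c R d \<rho> c id"
  unfolding rot_hom_def using assms by auto

theorem mainTheorem6:
  fixes P :: "nat \<Rightarrow> int \<Rightarrow> 'a::ab_group_add set"
    and d \<rho> :: "'a \<Rightarrow> 'a" and c :: "nat \<Rightarrow> 'a \<Rightarrow> 'a \<Rightarrow> 'a" and u :: 'a
  assumes "rotational_operad P d c u \<rho>"
  shows "rot_hom (thetaP P) (theta_d d) \<rho> (theta_comp c \<rho>) P d \<rho> c \<rho>
       \<and> rot_hom (thetaP P) (theta_d d) \<rho> (theta_comp c \<rho>) (ImRho P \<rho>) d \<rho> c \<rho>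
       \<and> (\<forall>n k. ImRho P \<rho> n k \<subseteq> KerRho P \<rho> n k \<and> KerRho P \<rho> n k \<subseteq> P n k)
       \<and> rot_hom (ImRho P \<rho>) d \<rho> c (KerRho P \<rho>) d \<rho> c id
       \<and> rot_hom (KerRho P \<rho>) d \<rho> c P d \<rho> c id
       \<and> (\<forall>n k. \<forall>a\<in>thetaP P n k. id (id (\<rho> a)) = \<rho> a)"
proof -
  have Im_Ker: "\<And>n k. ImRho P \<rho> n k \<subseteq> KerRho P \<rho> n k"
    using ImRho_subset_KerRho[OF assms] .
  have Ker_P: "\<And>n k. KerRho P \<rho> n k \<subseteq> P n k"
    using KerRho_subset .
  show ?thesis
    using rot_hom_rho_thetaP[OF assms] rot_hom_rho_thetaP_ImRho[OF assms] Im_Ker Ker_P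
      rot_hom_id_subset[of "ImRho P \<rho>" "KerRho P \<rho>", OF Im_Ker]
      rot_hom_id_subset[of "KerRho P \<rho>" P, OF Ker_P]
    by simp
qed

end
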